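(* Let $q\ge2$ and let $\phi:\mathbb R\to\mathbb R$ be bounded below, differentiable and non-increasing, with $\phi'(0)<0$ and $\phi(t)+\phi(-t)=2\phi(0)$ for all $t\in\mathbb R$. Then the surrogate $\mathcal L_r$ (whose noisy counterpart is the modified loss $\tilde{\mathcal L}_r$) is consistent with respect to the ranking loss $L_r$: there exists a nondecreasing concave function $\xi:[0,\infty)\to[0,\infty)$ with $\xi(0)=0$ and $\xi(t)\to0$ as $t\downarrow0$ such that for every distribution $\mathcal D$ on $\mathcal X\times\{-1,+1\}^q$ and every measurable $\mathbf f:\mathcal X\to\mathbb R^q$, $$R_{L_r}(\mathbf f)-R^*_{L_r}\le\xi\big(R_{\mathcal L_r}(\mathbf f)-R^*_{\mathcal L_r}\big).$$
   Context: Fix a feature space $\mathcal X$, $(x,\mathbf y)\sim\mathcal D$ with $\mathbf y\in\{-1,+1\}^q$, and $\mathbf f=(f_1,\dots,f_q)$. Surrogate: $\mathcal L_r(\mathbf f(x),\mathbf y)=\sum_{1\le j<k\le q}[\mathbb 1(y_j=+1,y_k=-1)\phi(f_j(x)-f_k(x))+\mathbb 1(y_j=-1,y_k=+1)\phi(f_k(x)-f_j(x))]$. Ranking loss: $L_r(\mathbf f(x),\mathbf y)=\sum_{1\le j<k\le q}[\mathbb 1(y_j<y_k)\ell(j,k)+\mathbb 1(y_j>y_k)\ell(k,j)]$ with $\ell(j,k)=\mathbb 1(f_j(x)>f_k(x))+\tfrac12\mathbb 1(f_j(x)=f_k(x))$. Risks $R_L(\mathbf f)=\mathbb E_{\mathcal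 D}[L(\mathbf f(x),\mathbf y)]$ and $R^*_L=\inf_{\mathbf g}R_L(\mathbf g)$ over measurable $\mathbf g:\mathcal X\to\mathbb R^q$, for $L\in\{L_r,\mathcal L_r\}$. (The modified loss $\tilde{\mathcal L}_r$ is the noise-corrected pairwise loss satisfying $\mathbb E_{\tilde{\mathbf y}\mid\mathbf y}[\tilde{\mathcal L}_r(\mathbf t,\tilde{\mathbf y})]=\mathcal L_r(\mathbf t,\mathbf y)$ under class-conditional independent label flips.) *)

theory Defs
  imports "HOL-Probability.Probability"
begin

definition label_space :: "nat \<Rightarrow> (nat \<Rightarrow> int) set" where
  "label_space q = {y. (\<forall>j<q. y j = -1 \<or> y j = 1) \<and> (\<forall>j\<ge>q. y j = 0)}"

definition ell :: "(nat \<Rightarrow> real) \<Rightarrow> nat \<Rightarrow> nat \<Rightarrow> real" where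
  "ell t j k = (if t j > t k then 1 else 0) + (if t j = t k then 1/2 else 0)"

definition rank_loss :: "nat \<Rightarrow> (nat \<Rightarrow> real) \<Rightarrow> (nat \<Rightarrow> int) \<Rightarrow> real" where
  "rank_loss q t y = (\<Sum>j<q. \<Sum>k\<in>{j<..<q}.
      (if y j < y k then ell t j k else 0) + (if y j > y k then ell t k j else 0))"

definition surr_loss :: "(real \<Rightarrow> real) \<Rightarrow> nat \<Rightarrow> (nat \<Rightarrow> real) \<Rightarrow> (nat \<Rightarrow> int) \<Rightarrow> real" where
  "surr_loss \<phi> q t y = (\<Sum>j<q. \<Sum>k\<in>{j<..<q}.
      (if y j = 1 \<and> y k = -1 then \<phi> (t j - t k) else 0)
    + (if y j = -1 \<and> y k = 1 then \<phi> (t k - t j) else 0))"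

definition scorers :: "'x measure \<Rightarrow> nat \<Rightarrow> ('x \<Rightarrow> nat \<Rightarrow> real) set" where
  "scorers M q = {f. \<forall>j<q. (\<lambda>x. f x j) \<in> borel_measurable M}"

definition risk :: "('x \<times> (nat \<Rightarrow> int)) measure \<Rightarrow> ((nat \<Rightarrow> real) \<Rightarrow> (nat \<Rightarrow> int) \<Rightarrow> real)
    \<Rightarrow> ('x \<Rightarrow> nat \<Rightarrow> real) \<Rightarrow> real" where
  "risk D L f = (\<integral>z. L (f (fst z)) (snd z) \<partial>D)"

definition bayes_risk :: "'x measure \<Rightarrow> nat \<Rightarrow> ('x \<times> (nat \<Rightarrow> int)) measure
    \<Rightarrow> ((nat \<Rightarrow> real) \<Rightarrow> (nat \<Rightarrow> int) \<Rightarrow> real) \<Rightarrow> real" where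
  "bayes_risk M q D L = (INF g \<in> scorers M q. risk D L g)"

end

theory Submission
  imports Defs
begin

(* On labels in {-1,1} both losses are sums over pairs j < k of a label-only term plus
   (y_j - y_k) H(t_j - t_k), with H d = - sgn d / 4 for L_r and, by the symmetry of \<phi>,
   H d = (\<phi> d - \<phi> 0) / 2 for the surrogate. Conditioning on x turns y_j - y_k into the gap
   \<Delta> = \<eta>_j - \<eta>_k of the conditional label means, and since \<Delta> H(n \<Delta>) tends to -C |\<Delta>| with
   C = sup |H|, the scorers n \<eta> drive either risk down to its Bayes risk. So both excess risks
   are sums of E[\<Delta> H(f_j - f_k) + C |\<Delta>|], with C = 1/4 resp. c/2 for c = \<phi> 0 - inf \<phi> > 0.
   As \<phi> is non-increasing, the integrands compare pointwise with factor 1/c, so \<xi> t = t / c. *)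

lemma (in finite_measure) ex_conditional_expectation:
  fixes G :: "'a \<Rightarrow> real"
  assumes [measurable]: "T \<in> measurable M N" "G \<in> borel_measurable M"
    and G_range: "\<And>x. x \<in> space M \<Longrightarrow> 0 \<le> G x \<and> G x \<le> 1"
  obtains p where "p \<in> borel_measurable N"
    and "\<And>h B. h \<in> borel_measurable N \<Longrightarrow> (\<And>y. \<bar>h y\<bar> \<le> B) \<Longrightarrow>
           integrable M (\<lambda>x. p (T x) * h (T x))"
    and "\<And>h B. h \<in> borel_measurable N \<Longrightarrow> (\<And>y. \<bar>h y\<bar> \<le> B) \<Longrightarrow>
           (\<integral>x. G x * h (T x) \<partial>M) = (\<integral>x. p (T x) * h (T x) \<partial>M)"
proof -
  define \<mu> where "\<mu> = distr M N T"
  define \<nu> where "\<nu> = distr (density M (\<lambda>x. ennreal (G x))) N T"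
  interpret \<mu>: finite_measure \<mu> unfolding \<mu>_def by (rule finite_measure_distr) simp
  have sets_\<nu>: "sets \<nu> = sets \<mu>" by (simp add: \<nu>_def \<mu>_def)
  have \<nu>_le_\<mu>: "emeasure \<nu> A \<le> emeasure \<mu> A" if A: "A \<in> sets N" for A
  proof -
    have "emeasure \<nu> A = emeasure (density M (\<lambda>x. ennreal (G x))) (T -` A \<inter> space M)"
      unfolding \<nu>_def using A by (subst emeasure_distr) auto
    also have "\<dots> = (\<integral>\<^sup>+x. ennreal (G x) * indicator (T -` A \<inter> space M) x \<partial>M)"
      using A by (subst emeasure_density) auto
    also have "\<dots> \<le> (\<integral>\<^sup>+x. indicator (T -` A \<inter> space M) x \<partial>M)"
      using G_range by (intro nn_integral_mono) (auto simp: indicator_def)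
    also have "\<dots> = emeasure \<mu> A"
      using A unfolding \<mu>_def by (subst emeasure_distr) (auto intro: nn_integral_indicator)
    finally show ?thesis .
  qed
  have ac: "absolutely_continuous \<mu> \<nu>"
    unfolding absolutely_continuous_def
  proof
    fix A assume "A \<in> null_sets \<mu>"
    then have "A \<in> sets N" "emeasure \<mu> A = 0" by (auto simp: \<mu>_def)
    then show "A \<in> null_sets \<nu>"
      using \<nu>_le_\<mu>[of A] sets_\<nu> by (auto simp: \<mu>_def)
  qed
  interpret \<nu>: finite_measure \<nu>
  proof
    show "emeasure \<nu> (space \<nu>) \<noteq> \<infinity>"
      using \<nu>_le_\<mu>[of "space N"] \<mu>.emeasure_finite[of "space N"]
      by (auto simp: \<nu>_def \<mu>_def top_unique)
  qed
  define p where "p y = enn2real (RN_deriv \<mu> \<nu> y)" for y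
  have p_measurable[measurable]: "p \<in> borel_measurable N"
    unfolding p_def using borel_measurable_RN_deriv[of \<mu> \<nu>] by (simp add: \<mu>_def)
  show thesis
  proof (rule that[OF p_measurable])
    fix h :: "_ \<Rightarrow> real" and B
    assume h[measurable]: "h \<in> borel_measurable N" and B: "\<And>y. \<bar>h y\<bar> \<le> B"
    have "integrable \<nu> h"
      by (rule \<nu>.integrable_const_bound[where B=B]) (use B in \<open>auto simp: \<nu>_def\<close>)
    then have "integrable \<mu> (\<lambda>y. p y * h y)"
      using \<mu>.RN_deriv_integrable[OF \<nu>.sigma_finite_measure ac sets_\<nu>] by (simp add: p_def \<mu>_def)
    then show "integrable M (\<lambda>x. p (T x) * h (T x))"
      unfolding \<mu>_def by (subst (asm) integrable_distr_eq) auto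
    have "(\<integral>x. G x * h (T x) \<partial>M) = integral\<^sup>L \<nu> h"
      using G_range by (simp add: \<nu>_def integral_distr integral_density)
    also have "\<dots> = (\<integral>y. p y * h y \<partial>\<mu>)"
      using \<mu>.RN_deriv_integral[OF \<nu>.sigma_finite_measure ac sets_\<nu>] by (simp add: p_def \<mu>_def)
    also have "\<dots> = (\<integral>x. p (T x) * h (T x) \<partial>M)"
      unfolding \<mu>_def by (simp add: integral_distr)
    finally show "(\<integral>x. G x * h (T x) \<partial>M) = (\<integral>x. p (T x) * h (T x) \<partial>M)" .
  qed
qed

definition pair_loss :: "nat \<Rightarrow> real \<Rightarrow> (real \<Rightarrow> real) \<Rightarrow> (nat \<Rightarrow> real) \<Rightarrow> (nat \<Rightarrow> int) \<Rightarrow> real" where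
  "pair_loss q b H t y = (\<Sum>j<q. \<Sum>k\<in>{j<..<q}.
     (if y j \<noteq> y k then b else 0) + real_of_int (y j - y k) * H (t j - t k))"

lemma rank_loss_eq_pair_loss:
  assumes "y \<in> label_space q"
  shows "rank_loss q t y = pair_loss q (1/2) (\<lambda>d. - sgn d / 4) t y"
  unfolding rank_loss_def pair_loss_def
proof (intro sum.cong refl)
  fix j k assume "j \<in> {..<q}" "k \<in> {j<..<q}"
  then have "j < q" "k < q" by auto
  then have "y j = 1 \<or> y j = -1" "y k = 1 \<or> y k = -1"
    using assms(1) unfolding label_space_def by auto
  then show "(if y j < y k then ell t j k else 0) + (if y k < y j then ell t k j else 0) =
     (if y j \<noteq> y k then 1/2 else 0) + real_of_int (y j - y k) * (- sgn (t j - t k) / 4)"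
    by (cases "t j > t k"; cases "t j = t k"; auto simp: ell_def sgn_if)
qed

lemma surr_loss_eq_pair_loss:
  assumes "y \<in> label_space q" and odd: "\<And>t. \<phi> t + \<phi> (- t) = 2 * \<phi> 0"
  shows "surr_loss \<phi> q t y = pair_loss q (\<phi> 0) (\<lambda>d. (\<phi> d - \<phi> 0) / 2) t y"
  unfolding surr_loss_def pair_loss_def
proof (intro sum.cong refl)
  fix j k assume "j \<in> {..<q}" "k \<in> {j<..<q}"
  then have "j < q" "k < q" by auto
  then have "y j = 1 \<or> y j = -1" "y k = 1 \<or> y k = -1"
    using assms(1) unfolding label_space_def by auto
  moreover have "\<phi> (t k - t j) = 2 * \<phi> 0 - \<phi> (t j - t k)"
    using odd[of "t j - t k"] by simp
  ultimately show "(if y j = 1 \<and> y k = - 1 then \<phi> (t j - t k) else 0) +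
        (if y j = - 1 \<and> y k = 1 then \<phi> (t k - t j) else 0) =
     (if y j \<noteq> y k then \<phi> 0 else 0) + real_of_int (y j - y k) * ((\<phi> (t j - t k) - \<phi> 0) / 2)"
    by (elim disjE) (auto simp: field_simps)
qed

lemma scorers_margin_measurable:
  assumes "g \<in> scorers M q" "j < q" "k < q" "H \<in> borel_measurable borel"
  shows "(\<lambda>x. H (g x j - g x k)) \<in> borel_measurable M"
proof -
  have "(\<lambda>x. g x j) \<in> borel_measurable M" "(\<lambda>x. g x k) \<in> borel_measurable M"
    using assms by (auto simp: scorers_def)
  from measurable_compose[OF borel_measurable_diff[OF this] assms(4)] show ?thesis .
qed

definition phi_gap :: "(real \<Rightarrow> real) \<Rightarrow> real" where
  "phi_gap \<phi> = \<phi> 0 - Inf (range \<phi>)"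

lemma phi_gap_pos:
  fixes \<phi> :: "real \<Rightarrow> real"
  assumes "bdd_below (range \<phi>)" "\<phi> differentiable (at 0)" "deriv \<phi> 0 < 0"
  shows "0 < phi_gap \<phi>"
proof -
  have "DERIV \<phi> 0 :> deriv \<phi> 0"
    using assms(2) by (simp add: DERIV_deriv_iff_real_differentiable)
  from DERIV_neg_dec_right[OF this assms(3)]
  obtain d where "d > 0" "\<And>h. h > 0 \<Longrightarrow> h < d \<Longrightarrow> \<phi> (0 + h) < \<phi> 0" by blast
  then have "\<phi> (d/2) < \<phi> 0" by simp
  moreover have "Inf (range \<phi>) \<le> \<phi> (d/2)" using assms(1) by (simp add: cInf_lower)
  ultimately show ?thesis by (simp add: phi_gap_def)
qed

lemma abs_phi_diff_le_phi_gap: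
  fixes \<phi> :: "real \<Rightarrow> real"
  assumes "bdd_below (range \<phi>)" and odd: "\<And>t. \<phi> t + \<phi> (- t) = 2 * \<phi> 0"
  shows "\<bar>\<phi> d - \<phi> 0\<bar> \<le> phi_gap \<phi>"
proof -
  have "Inf (range \<phi>) \<le> \<phi> t" for t using assms(1) by (simp add: cInf_lower)
  from this[of d] this[of "- d"] odd[of d] show ?thesis by (simp add: phi_gap_def)
qed

lemma antimono_tendsto_Inf_at_top:
  fixes f :: "'a::linorder \<Rightarrow> 'b::{conditionally_complete_linorder, linorder_topology}"
  assumes "bdd_below (range f)" "antimono f"
  shows "(f \<longlongrightarrow> Inf (range f)) at_top"
proof (rule order_tendstoI)
  fix a assume "a < Inf (range f)"
  then show "eventually (\<lambda>t. a < f t) at_top"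
    using assms(1) by (intro always_eventually allI) (auto intro: less_le_trans cInf_lower)
next
  fix a assume "Inf (range f) < a"
  then obtain t\<^sub>0 where "f t\<^sub>0 < a" using cInf_lessD[of "range f" a] by auto
  then show "eventually (\<lambda>t. f t < a) at_top"
    using assms(2) unfolding eventually_at_top_linorder antimono_def
    by (intro exI[of _ t\<^sub>0]) (auto intro: le_less_trans)
qed

lemma antimono_borel_measurable:
  fixes f :: "real \<Rightarrow> real"
  assumes "antimono f"
  shows "f \<in> borel_measurable borel"
proof -
  have "(\<lambda>x. - f x) \<in> borel_measurable borel"
    using assms by (intro borel_measurable_mono) (auto simp: mono_def antimono_def)
  then show ?thesis using borel_measurable_uminus[of "\<lambda>x. - f x"] by simp
qed

lemma tendsto_scaled_phi_margin:
  fixes \<phi> :: "real \<Rightarrow> real"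
  assumes "bdd_below (range \<phi>)" "antimono \<phi>" and odd: "\<And>t. \<phi> t + \<phi> (- t) = 2 * \<phi> 0"
  shows "(\<lambda>n. a * ((\<phi> (real n * a) - \<phi> 0) / 2)) \<longlonglongrightarrow> - (phi_gap \<phi> / 2 * \<bar>a\<bar>)"
proof -
  have lim_Inf: "(\<lambda>n. \<phi> (real n * b)) \<longlonglongrightarrow> Inf (range \<phi>)" if "b > 0" for b
  proof -
    have "filterlim (\<lambda>n. real n * b) at_top sequentially"
      using that by (intro filterlim_at_top_mult_tendsto_pos[OF tendsto_const] filterlim_real_sequentially)
    with antimono_tendsto_Inf_at_top[OF assms(1,2)] show ?thesis by (rule filterlim_compose)
  qed
  consider "a > 0" | "a < 0" | "a = 0" by linarith
  then show ?thesis
  proof cases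
    case 1
    with lim_Inf[OF 1] show ?thesis
      by (auto intro!: tendsto_eq_intros simp: phi_gap_def field_simps)
  next
    case 2
    have "\<phi> (real n * a) - \<phi> 0 = \<phi> 0 - \<phi> (real n * - a)" for n
      using odd[of "real n * a"] by simp
    moreover have "(\<lambda>n. a * ((\<phi> 0 - \<phi> (real n * - a)) / 2)) \<longlonglongrightarrow> - (phi_gap \<phi> / 2 * \<bar>a\<bar>)"
      using lim_Inf[of "- a"] 2 by (auto intro!: tendsto_eq_intros simp: phi_gap_def field_simps)
    ultimately show ?thesis by simp
  qed simp
qed

lemma tendsto_scaled_sgn_margin: "(\<lambda>n. a * (- sgn (real n * a) / 4)) \<longlonglongrightarrow> - (1/4 * \<bar>a\<bar>)"
proof (rule tendsto_eventually)
  show "\<forall>\<^sub>F n in sequentially. a * (- sgn (real n * a) / 4) = - (1/4 * \<bar>a\<bar>)"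
    using eventually_ge_at_top[of "1::nat"]
    by eventually_elim (auto simp: sgn_if abs_if zero_less_mult_iff mult_less_0_iff)
qed

lemma sgn_margin_calibration:
  fixes a c d h :: real
  assumes "c > 0" "\<bar>h\<bar> \<le> c / 2" "d > 0 \<Longrightarrow> h \<le> 0" "d < 0 \<Longrightarrow> h \<ge> 0" "d = 0 \<Longrightarrow> h = 0"
  shows "a * (- sgn d / 4) + 1/4 * \<bar>a\<bar> \<le> (a * h + c / 2 * \<bar>a\<bar>) / c"
proof -
  have h_bounds: "- (c / 2) \<le> h" "h \<le> c / 2" using assms(2) by linarith+
  have "c * (a * (- sgn d / 4) + 1/4 * \<bar>a\<bar>) \<le> a * h + c / 2 * \<bar>a\<bar>"
  proof (cases d "0::real" rule: linorder_cases)
    case less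
    then have "0 \<le> h" using assms(4) by simp
    then show ?thesis
      using less h_bounds mult_nonpos_nonpos[of a "h - c/2"] mult_nonneg_nonneg[of a h]
      by (cases "a \<ge> 0") (auto simp: abs_if algebra_simps)
  next
    case greater
    then have "h \<le> 0" using assms(3) by simp
    then show ?thesis
      using greater h_bounds mult_nonneg_nonneg[of a "h + c/2"] mult_nonpos_nonpos[of a h]
      by (cases "a \<ge> 0") (auto simp: abs_if algebra_simps)
  qed (use assms in auto)
  then show ?thesis using assms(1) by (simp add: pos_le_divide_eq mult.commute)
qed

locale labelled_sample = prob_space D
  for D :: "('x \<times> (nat \<Rightarrow> int)) measure" +
  fixes M :: "'x measure" and q :: nat
  assumes sets_D: "sets D = sets (M \<Otimes>\<^sub>M count_space (label_space q))"
begin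

lemma space_D: "space D = space M \<times> label_space q"
  using sets_eq_imp_space_eq[OF sets_D] by (simp add: space_pair_measure)

lemma measurable_fst_D[measurable]: "fst \<in> measurable D M"
  by (subst measurable_cong_sets[OF sets_D refl]) simp

lemma measurable_snd_D[measurable]: "snd \<in> measurable D (count_space (label_space q))"
  by (subst measurable_cong_sets[OF sets_D refl]) simp

lemma borel_measurable_label_fun:
  "(\<lambda>z. F (snd z)) \<in> borel_measurable D" for F :: "(nat \<Rightarrow> int) \<Rightarrow> real"
  using measurable_comp[OF measurable_snd_D, of F borel] by (simp add: o_def)

lemma label_values: "z \<in> space D \<Longrightarrow> j < q \<Longrightarrow> snd z j = 1 \<or> snd z j = -1"
  by (auto simp: space_D label_space_def)

lemma integrable_label_mult:
  assumes "j < q" "h \<in> borel_measurable M" "\<And>x. \<bar>h x\<bar> \<le> B"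
  shows "integrable D (\<lambda>z. real_of_int (snd z j) * h (fst z))"
proof (rule integrable_const_bound[where B=B])
  show "AE z in D. norm (real_of_int (snd z j) * h (fst z)) \<le> B"
    using label_values assms by (intro AE_I2) (fastforce simp: abs_mult)
  show "(\<lambda>z. real_of_int (snd z j) * h (fst z)) \<in> borel_measurable D"
    using borel_measurable_label_fun[of "\<lambda>y. real_of_int (y j)"] assms(2) by measurable
qed

lemma integrable_label_diff_mult:
  assumes "j < q" "k < q" "h \<in> borel_measurable M" "\<And>x. \<bar>h x\<bar> \<le> B"
  shows "integrable D (\<lambda>z. real_of_int (snd z j - snd z k) * h (fst z))"
  using Bochner_Integration.integrable_diff[OF integrable_label_mult[OF assms(1,3,4)]
      integrable_label_mult[OF assms(2,3,4)]]
  by (simp add: left_diff_distrib)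

definition is_label_mean :: "nat \<Rightarrow> ('x \<Rightarrow> real) \<Rightarrow> bool" where
  "is_label_mean j e \<longleftrightarrow> e \<in> borel_measurable M \<and>
     (\<forall>h B. h \<in> borel_measurable M \<longrightarrow> (\<forall>x. \<bar>h x\<bar> \<le> B) \<longrightarrow>
        integrable D (\<lambda>z. e (fst z) * h (fst z)) \<and>
        (\<integral>z. real_of_int (snd z j) * h (fst z) \<partial>D) = (\<integral>z. e (fst z) * h (fst z) \<partial>D))"

lemma ex_label_mean:
  assumes j: "j < q"
  shows "\<exists>e. is_label_mean j e"
proof -
  define G where "G z = (if snd z j = 1 then 1 else 0 :: real)" for z :: "'x \<times> (nat \<Rightarrow> int)"
  have G_measurable[measurable]: "G \<in> borel_measurable D"
    unfolding G_def[abs_def] by (rule borel_measurable_label_fun)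
  obtain p where p[measurable]: "p \<in> borel_measurable M"
    and p_int: "\<And>h B. h \<in> borel_measurable M \<Longrightarrow> (\<And>x. \<bar>h x\<bar> \<le> B) \<Longrightarrow>
           integrable D (\<lambda>z. p (fst z) * h (fst z))"
    and p_eq: "\<And>h B. h \<in> borel_measurable M \<Longrightarrow> (\<And>x. \<bar>h x\<bar> \<le> B) \<Longrightarrow>
           (\<integral>z. G z * h (fst z) \<partial>D) = (\<integral>z. p (fst z) * h (fst z) \<partial>D)"
    by (rule ex_conditional_expectation[OF measurable_fst_D G_measurable]) (auto simp: G_def)
  have "is_label_mean j (\<lambda>x. 2 * p x - 1)"
    unfolding is_label_mean_def
  proof (intro conjI allI impI)
    fix h :: "'x \<Rightarrow> real" and B
    assume h[measurable]: "h \<in> borel_measurable M" and "\<forall>x. \<bar>h x\<bar> \<le> B"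
    then have B: "\<And>x. \<bar>h x\<bar> \<le> B" by blast
    have h_int: "integrable D (\<lambda>z. h (fst z))"
      by (rule integrable_const_bound[where B=B]) (use B in auto)
    have G_int: "integrable D (\<lambda>z. G z * h (fst z))"
    proof (rule integrable_const_bound[where B=B])
      show "AE z in D. norm (G z * h (fst z)) \<le> B"
        using B order_trans[OF abs_ge_zero B] by (auto simp: G_def)
    qed measurable
    have p_int': "integrable D (\<lambda>z. p (fst z) * h (fst z))" using p_int[OF h B] .
    then show "integrable D (\<lambda>z. (2 * p (fst z) - 1) * h (fst z))"
      using h_int by (simp add: algebra_simps)
    have "(\<integral>z. real_of_int (snd z j) * h (fst z) \<partial>D) = (\<integral>z. 2 * (G z * h (fst z)) - h (fst z) \<partial>D)"
    proof (intro Bochner_Integration.integral_cong refl)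
      fix z assume "z \<in> space D"
      from label_values[OF this j]
      show "real_of_int (snd z j) * h (fst z) = 2 * (G z * h (fst z)) - h (fst z)"
        by (auto simp: G_def)
    qed
    also have "\<dots> = 2 * (\<integral>z. p (fst z) * h (fst z) \<partial>D) - (\<integral>z. h (fst z) \<partial>D)"
      using G_int h_int p_eq[OF h B] by simp
    also have "\<dots> = (\<integral>z. (2 * p (fst z) - 1) * h (fst z) \<partial>D)"
      using p_int' h_int by (simp add: algebra_simps)
    finally show "(\<integral>z. real_of_int (snd z j) * h (fst z) \<partial>D) = (\<integral>z. (2 * p (fst z) - 1) * h (fst z) \<partial>D)" .
  qed simp
  then show ?thesis by blast
qed

definition pair_base_risk :: "real \<Rightarrow> real" where
  "pair_base_risk b = (\<Sum>j<q. \<Sum>k\<in>{j<..<q}. \<integral>z. (if snd z j \<noteq> snd z k then b else 0) \<partial>D)"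

lemma risk_cong_label_space:
  assumes "\<And>t y. y \<in> label_space q \<Longrightarrow> L t y = L' t y"
  shows "risk D L g = risk D L' g"
  unfolding risk_def using assms by (intro Bochner_Integration.integral_cong refl) (auto simp: space_D)

lemma bayes_risk_cong_label_space:
  assumes "\<And>t y. y \<in> label_space q \<Longrightarrow> L t y = L' t y"
  shows "bayes_risk M q D L = bayes_risk M q D L'"
  unfolding bayes_risk_def using risk_cong_label_space[OF assms] by simp

end

locale label_regression = labelled_sample D M q
  for D :: "('x \<times> (nat \<Rightarrow> int)) measure" and M q +
  fixes \<eta> :: "nat \<Rightarrow> 'x \<Rightarrow> real"
  assumes label_mean: "j < q \<Longrightarrow> is_label_mean j (\<eta> j)"
begin

definition gap :: "nat \<Rightarrow> nat \<Rightarrow> 'x \<Rightarrow> real" where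
  "gap j k x = \<eta> j x - \<eta> k x"

definition gap_mass :: "nat \<Rightarrow> nat \<Rightarrow> real" where
  "gap_mass j k = (\<integral>z. \<bar>gap j k (fst z)\<bar> \<partial>D)"

definition margin_risk :: "(real \<Rightarrow> real) \<Rightarrow> ('x \<Rightarrow> nat \<Rightarrow> real) \<Rightarrow> nat \<Rightarrow> nat \<Rightarrow> real" where
  "margin_risk H g j k = (\<integral>z. gap j k (fst z) * H (g (fst z) j - g (fst z) k) \<partial>D)"

lemma \<eta>_measurable[measurable]: "j < q \<Longrightarrow> \<eta> j \<in> borel_measurable M"
  using label_mean by (simp add: is_label_mean_def)

lemma gap_measurable[measurable]: "j < q \<Longrightarrow> k < q \<Longrightarrow> gap j k \<in> borel_measurable M"
  unfolding gap_def[abs_def] by measurable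

lemma
  assumes "j < q" "k < q" "h \<in> borel_measurable M" "\<And>x. \<bar>h x\<bar> \<le> B"
  shows integrable_gap_mult: "integrable D (\<lambda>z. gap j k (fst z) * h (fst z))"
    and integral_label_diff_mult:
      "(\<integral>z. real_of_int (snd z j - snd z k) * h (fst z) \<partial>D) = (\<integral>z. gap j k (fst z) * h (fst z) \<partial>D)"
proof -
  have "\<forall>x. \<bar>h x\<bar> \<le> B" using assms(4) by blast
  then have int: "integrable D (\<lambda>z. \<eta> i (fst z) * h (fst z))"
    and eq: "(\<integral>z. real_of_int (snd z i) * h (fst z) \<partial>D) = (\<integral>z. \<eta> i (fst z) * h (fst z) \<partial>D)"
    if "i < q" for i
    using label_mean[OF that] assms(3) unfolding is_label_mean_def by blast+
  show "integrable D (\<lambda>z. gap j k (fst z) * h (fst z))"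
    using Bochner_Integration.integrable_diff[OF int[OF assms(1)] int[OF assms(2)]]
    by (simp add: gap_def left_diff_distrib)
  have "(\<integral>z. real_of_int (snd z j - snd z k) * h (fst z) \<partial>D)
      = (\<integral>z. real_of_int (snd z j) * h (fst z) \<partial>D) - (\<integral>z. real_of_int (snd z k) * h (fst z) \<partial>D)"
    using integrable_label_mult[OF _ assms(3,4)] assms(1,2) by (simp add: left_diff_distrib)
  also have "\<dots> = (\<integral>z. gap j k (fst z) * h (fst z) \<partial>D)"
    using int assms(1,2) by (simp add: eq gap_def left_diff_distrib)
  finally show "(\<integral>z. real_of_int (snd z j - snd z k) * h (fst z) \<partial>D) = (\<integral>z. gap j k (fst z) * h (fst z) \<partial>D)" .
qed

lemma integrable_abs_gap:
  assumes "j < q" "k < q"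
  shows "integrable D (\<lambda>z. \<bar>gap j k (fst z)\<bar>)"
proof -
  have "integrable D (\<lambda>z. gap j k (fst z) * sgn (gap j k (fst z)))"
    by (rule integrable_gap_mult[OF assms, where B=1]) (use assms in \<open>auto simp: abs_sgn_eq\<close>)
  then show ?thesis by (simp flip: abs_sgn)
qed

lemma integrable_margin:
  assumes "j < q" "k < q" "g \<in> scorers M q" "H \<in> borel_measurable borel" "\<And>d. \<bar>H d\<bar> \<le> C"
  shows "integrable D (\<lambda>z. gap j k (fst z) * H (g (fst z) j - g (fst z) k))"
  using integrable_gap_mult[OF assms(1,2) scorers_margin_measurable[OF assms(3,1,2,4)]] assms(5) .

lemma integral_pair_term:
  assumes "j < q" "k < q" "g \<in> scorers M q" "H \<in> borel_measurable borel" "\<And>d. \<bar>H d\<bar> \<le> C"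
  shows "integrable D (\<lambda>z. (if snd z j \<noteq> snd z k then b else 0)
           + real_of_int (snd z j - snd z k) * H (g (fst z) j - g (fst z) k))"
    and "(\<integral>z. (if snd z j \<noteq> snd z k then b else 0)
           + real_of_int (snd z j - snd z k) * H (g (fst z) j - g (fst z) k) \<partial>D)
         = (\<integral>z. (if snd z j \<noteq> snd z k then b else 0) \<partial>D) + margin_risk H g j k"
proof -
  note H_g = scorers_margin_measurable[OF assms(3,1,2,4)]
  have base: "integrable D (\<lambda>z. if snd z j \<noteq> snd z k then b else 0)"
    by (rule integrable_const_bound[where B="\<bar>b\<bar>"])
       (auto intro: borel_measurable_label_fun[of "\<lambda>y. if y j \<noteq> y k then b else 0"])
  note margin = integrable_label_diff_mult[OF assms(1,2) H_g assms(5)]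
  show "integrable D (\<lambda>z. (if snd z j \<noteq> snd z k then b else 0)
           + real_of_int (snd z j - snd z k) * H (g (fst z) j - g (fst z) k))"
    using base margin by simp
  show "(\<integral>z. (if snd z j \<noteq> snd z k then b else 0)
           + real_of_int (snd z j - snd z k) * H (g (fst z) j - g (fst z) k) \<partial>D)
         = (\<integral>z. (if snd z j \<noteq> snd z k then b else 0) \<partial>D) + margin_risk H g j k"
    using base margin integral_label_diff_mult[OF assms(1,2) H_g assms(5)]
    by (simp add: margin_risk_def)
qed

lemma risk_pair_loss:
  assumes "g \<in> scorers M q" "H \<in> borel_measurable borel" "\<And>d. \<bar>H d\<bar> \<le> C"
  shows "risk D (pair_loss q b H) g = pair_base_risk b + (\<Sum>j<q. \<Sum>k\<in>{j<..<q}. margin_risk H g j k)"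
proof -
  note pair_term = integral_pair_term[OF _ _ assms, where b=b]
  have "risk D (pair_loss q b H) g = (\<Sum>j<q. \<Sum>k\<in>{j<..<q}. \<integral>z.
      (if snd z j \<noteq> snd z k then b else 0)
      + real_of_int (snd z j - snd z k) * H (g (fst z) j - g (fst z) k) \<partial>D)"
    unfolding risk_def pair_loss_def
    using pair_term(1)
    by (subst Bochner_Integration.integral_sum) (auto intro!: Bochner_Integration.integrable_sum)
  also have "\<dots> = pair_base_risk b + (\<Sum>j<q. \<Sum>k\<in>{j<..<q}. margin_risk H g j k)"
    unfolding pair_base_risk_def sum.distrib[symmetric] using pair_term(2) by simp
  finally show ?thesis .
qed

lemma margin_risk_ge:
  assumes "j < q" "k < q" "g \<in> scorers M q" "H \<in> borel_measurable borel" "\<And>d. \<bar>H d\<bar> \<le> C"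
  shows "- (C * gap_mass j k) \<le> margin_risk H g j k"
proof -
  have "(\<integral>z. - (C * \<bar>gap j k (fst z)\<bar>) \<partial>D) \<le> margin_risk H g j k"
    unfolding margin_risk_def
  proof (rule integral_mono)
    show "integrable D (\<lambda>z. - (C * \<bar>gap j k (fst z)\<bar>))"
      using integrable_abs_gap[OF assms(1,2)] by simp
    show "integrable D (\<lambda>z. gap j k (fst z) * H (g (fst z) j - g (fst z) k))"
      by (rule integrable_margin[OF assms])
    fix z
    have "\<bar>gap j k (fst z) * H (g (fst z) j - g (fst z) k)\<bar> \<le> \<bar>gap j k (fst z)\<bar> * C"
      unfolding abs_mult by (intro mult_left_mono assms(5)) simp
    then show "- (C * \<bar>gap j k (fst z)\<bar>) \<le> gap j k (fst z) * H (g (fst z) j - g (fst z) k)"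
      by (simp add: abs_le_iff mult.commute)
  qed
  then show ?thesis by (simp add: gap_mass_def)
qed

lemma tendsto_margin_risk_scaled:
  assumes "j < q" "k < q" "H \<in> borel_measurable borel" "\<And>d. \<bar>H d\<bar> \<le> C"
    and lim: "\<And>a. (\<lambda>n. a * H (real n * a)) \<longlonglongrightarrow> - (C * \<bar>a\<bar>)"
  shows "(\<lambda>n. margin_risk H (\<lambda>x i. real n * \<eta> i x) j k) \<longlonglongrightarrow> - (C * gap_mass j k)"
proof -
  note [measurable] = gap_measurable[OF assms(1,2)] assms(3)
  have "(\<lambda>n. \<integral>z. gap j k (fst z) * H (real n * gap j k (fst z)) \<partial>D)
      \<longlonglongrightarrow> (\<integral>z. - (C * \<bar>gap j k (fst z)\<bar>) \<partial>D)"
  proof (rule integral_dominated_convergence[where w="\<lambda>z. C * \<bar>gap j k (fst z)\<bar>"])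
    show "integrable D (\<lambda>z. C * \<bar>gap j k (fst z)\<bar>)"
      using integrable_abs_gap[OF assms(1,2)] by simp
    show "AE z in D. (\<lambda>n. gap j k (fst z) * H (real n * gap j k (fst z)))
        \<longlonglongrightarrow> - (C * \<bar>gap j k (fst z)\<bar>)"
      by (intro AE_I2 lim)
    show "AE z in D. norm (gap j k (fst z) * H (real n * gap j k (fst z)))
        \<le> C * \<bar>gap j k (fst z)\<bar>" for n
    proof (intro AE_I2)
      fix z
      have "\<bar>gap j k (fst z)\<bar> * \<bar>H (real n * gap j k (fst z))\<bar> \<le> \<bar>gap j k (fst z)\<bar> * C"
        by (intro mult_left_mono assms(4)) simp
      then show "norm (gap j k (fst z) * H (real n * gap j k (fst z))) \<le> C * \<bar>gap j k (fst z)\<bar>"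
        by (simp add: abs_mult mult.commute)
    qed
    show "(\<lambda>z. - (C * \<bar>gap j k (fst z)\<bar>)) \<in> borel_measurable D"
      by measurable
    show "(\<lambda>z. gap j k (fst z) * H (real n * gap j k (fst z))) \<in> borel_measurable D" for n
      by measurable
  qed
  then show ?thesis
    by (simp add: margin_risk_def gap_mass_def gap_def right_diff_distrib)
qed

lemma bayes_risk_pair_loss:
  assumes "H \<in> borel_measurable borel" "\<And>d. \<bar>H d\<bar> \<le> C"
    and "\<And>a. (\<lambda>n. a * H (real n * a)) \<longlonglongrightarrow> - (C * \<bar>a\<bar>)"
  shows "bayes_risk M q D (pair_loss q b H)
      = pair_base_risk b - C * (\<Sum>j<q. \<Sum>k\<in>{j<..<q}. gap_mass j k)"
    (is "_ = ?opt")
proof (rule antisym)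
  have risk_ge: "?opt \<le> risk D (pair_loss q b H) g" if g: "g \<in> scorers M q" for g
  proof -
    have "?opt = pair_base_risk b + (\<Sum>j<q. \<Sum>k\<in>{j<..<q}. - (C * gap_mass j k))"
      by (simp add: sum_distrib_left sum_negf)
    also have "\<dots> \<le> risk D (pair_loss q b H) g"
      unfolding risk_pair_loss[OF g assms(1,2)]
      by (intro add_left_mono sum_mono margin_risk_ge[OF _ _ g assms(1,2)]) auto
    finally show ?thesis .
  qed
  have "(\<lambda>x j. 0) \<in> scorers M q" by (simp add: scorers_def)
  then show "?opt \<le> bayes_risk M q D (pair_loss q b H)"
    unfolding bayes_risk_def using risk_ge by (intro cINF_greatest) auto
  define g where "g n = (\<lambda>x i. real n * \<eta> i x)" for n :: nat
  have g: "g n \<in> scorers M q" for n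
    by (auto simp: g_def scorers_def)
  have "(\<lambda>n. risk D (pair_loss q b H) (g n))
      \<longlonglongrightarrow> pair_base_risk b + (\<Sum>j<q. \<Sum>k\<in>{j<..<q}. - (C * gap_mass j k))"
    unfolding risk_pair_loss[OF g assms(1,2)] unfolding g_def
    by (intro tendsto_add tendsto_const tendsto_sum tendsto_margin_risk_scaled assms) auto
  then have lim: "(\<lambda>n. risk D (pair_loss q b H) (g n)) \<longlonglongrightarrow> ?opt"
    by (simp add: sum_distrib_left sum_negf)
  have "bdd_below (risk D (pair_loss q b H) ` scorers M q)"
    using risk_ge by (rule bdd_belowI2)
  then have "bayes_risk M q D (pair_loss q b H) \<le> risk D (pair_loss q b H) (g n)" for n
    unfolding bayes_risk_def using g by (rule cINF_lower)
  then show "bayes_risk M q D (pair_loss q b H) \<le> ?opt"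
    using lim by (intro LIMSEQ_le_const) auto
qed

lemma excess_risk_pair_loss:
  assumes "g \<in> scorers M q" "H \<in> borel_measurable borel" "\<And>d. \<bar>H d\<bar> \<le> C"
    and "\<And>a. (\<lambda>n. a * H (real n * a)) \<longlonglongrightarrow> - (C * \<bar>a\<bar>)"
  shows "risk D (pair_loss q b H) g - bayes_risk M q D (pair_loss q b H)
      = (\<Sum>j<q. \<Sum>k\<in>{j<..<q}. \<integral>z. gap j k (fst z) * H (g (fst z) j - g (fst z) k)
                                   + C * \<bar>gap j k (fst z)\<bar> \<partial>D)"
proof -
  have "(\<integral>z. gap j k (fst z) * H (g (fst z) j - g (fst z) k) + C * \<bar>gap j k (fst z)\<bar> \<partial>D)
      = margin_risk H g j k + C * gap_mass j k" if "j < q" "k < q" for j k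
    using integrable_margin[OF that assms(1-3)] integrable_abs_gap[OF that]
    by (simp add: margin_risk_def gap_mass_def)
  then show ?thesis
    unfolding risk_pair_loss[OF assms(1-3)] bayes_risk_pair_loss[OF assms(2-4)]
    by (simp add: sum.distrib sum_distrib_left)
qed

lemma excess_risk_pair_loss_le:
  assumes "g \<in> scorers M q" and "c > 0"
    and H\<^sub>1: "H\<^sub>1 \<in> borel_measurable borel" "\<And>d. \<bar>H\<^sub>1 d\<bar> \<le> C\<^sub>1"
      "\<And>a. (\<lambda>n. a * H\<^sub>1 (real n * a)) \<longlonglongrightarrow> - (C\<^sub>1 * \<bar>a\<bar>)"
    and H\<^sub>2: "H\<^sub>2 \<in> borel_measurable borel" "\<And>d. \<bar>H\<^sub>2 d\<bar> \<le> C\<^sub>2"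
      "\<And>a. (\<lambda>n. a * H\<^sub>2 (real n * a)) \<longlonglongrightarrow> - (C\<^sub>2 * \<bar>a\<bar>)"
    and pointwise: "\<And>a d. a * H\<^sub>1 d + C\<^sub>1 * \<bar>a\<bar> \<le> (a * H\<^sub>2 d + C\<^sub>2 * \<bar>a\<bar>) / c"
  shows "risk D (pair_loss q b\<^sub>1 H\<^sub>1) g - bayes_risk M q D (pair_loss q b\<^sub>1 H\<^sub>1)
      \<le> (risk D (pair_loss q b\<^sub>2 H\<^sub>2) g - bayes_risk M q D (pair_loss q b\<^sub>2 H\<^sub>2)) / c"
  unfolding excess_risk_pair_loss[OF assms(1) H\<^sub>1] excess_risk_pair_loss[OF assms(1) H\<^sub>2]
    sum_divide_distrib
proof (intro sum_mono)
  fix j k assume "j \<in> {..<q}" "k \<in> {j<..<q}"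
  then have jk: "j < q" "k < q" by auto
  note margin = integrable_margin[OF jk assms(1)]
  have "(\<integral>z. gap j k (fst z) * H\<^sub>1 (g (fst z) j - g (fst z) k) + C\<^sub>1 * \<bar>gap j k (fst z)\<bar> \<partial>D)
      \<le> (\<integral>z. (gap j k (fst z) * H\<^sub>2 (g (fst z) j - g (fst z) k) + C\<^sub>2 * \<bar>gap j k (fst z)\<bar>) / c \<partial>D)"
    using margin[OF H\<^sub>1(1,2)] margin[OF H\<^sub>2(1,2)] integrable_abs_gap[OF jk]
    by (intro integral_mono pointwise) auto
  then show "(\<integral>z. gap j k (fst z) * H\<^sub>1 (g (fst z) j - g (fst z) k) + C\<^sub>1 * \<bar>gap j k (fst z)\<bar> \<partial>D)
      \<le> (\<integral>z. gap j k (fst z) * H\<^sub>2 (g (fst z) j - g (fst z) k) + C\<^sub>2 * \<bar>gap j k (fst z)\<bar> \<partial>D) / c"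
    by simp
qed

end

lemma (in labelled_sample) excess_rank_risk_le:
  fixes \<phi> :: "real \<Rightarrow> real"
  assumes bdd: "bdd_below (range \<phi>)" and "\<phi> differentiable (at 0)" "deriv \<phi> 0 < 0"
    and anti: "antimono \<phi>" and odd: "\<And>t. \<phi> t + \<phi> (- t) = 2 * \<phi> 0"
    and f: "f \<in> scorers M q"
  shows "risk D (rank_loss q) f - bayes_risk M q D (rank_loss q)
      \<le> (risk D (surr_loss \<phi> q) f - bayes_risk M q D (surr_loss \<phi> q)) / phi_gap \<phi>"
proof -
  obtain \<eta> where "\<And>j. j < q \<Longrightarrow> is_label_mean j (\<eta> j)"
    using ex_label_mean by metis
  then interpret label_regression D M q \<eta> by unfold_locales
  note [measurable] = antimono_borel_measurable[OF anti]
  have "risk D (pair_loss q (1/2) (\<lambda>d. - sgn d / 4)) f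
          - bayes_risk M q D (pair_loss q (1/2) (\<lambda>d. - sgn d / 4))
      \<le> (risk D (pair_loss q (\<phi> 0) (\<lambda>d. (\<phi> d - \<phi> 0) / 2)) f
          - bayes_risk M q D (pair_loss q (\<phi> 0) (\<lambda>d. (\<phi> d - \<phi> 0) / 2))) / phi_gap \<phi>"
  proof (rule excess_risk_pair_loss_le[OF f phi_gap_pos[OF bdd assms(2,3)]])
    show "\<bar>- sgn d / 4\<bar> \<le> 1/4" for d :: real by (simp add: abs_sgn_eq)
    show "\<bar>(\<phi> d - \<phi> 0) / 2\<bar> \<le> phi_gap \<phi> / 2" for d
      using abs_phi_diff_le_phi_gap[OF bdd odd] by simp
    show "(\<lambda>n. a * ((\<phi> (real n * a) - \<phi> 0) / 2)) \<longlonglongrightarrow> - (phi_gap \<phi> / 2 * \<bar>a\<bar>)" for a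
      by (rule tendsto_scaled_phi_margin[OF bdd anti odd])
    show "a * (- sgn d / 4) + 1/4 * \<bar>a\<bar>
        \<le> (a * ((\<phi> d - \<phi> 0) / 2) + phi_gap \<phi> / 2 * \<bar>a\<bar>) / phi_gap \<phi>" for a d
      using anti abs_phi_diff_le_phi_gap[OF bdd odd, of d]
      by (intro sgn_margin_calibration phi_gap_pos[OF bdd assms(2,3)]) (auto simp: antimono_def)
    show "(\<lambda>n. a * (- sgn (real n * a) / 4)) \<longlonglongrightarrow> - (1/4 * \<bar>a\<bar>)" for a
      by (rule tendsto_scaled_sgn_margin)
    show "(\<lambda>d::real. - sgn d / 4) \<in> borel_measurable borel" by measurable
    show "(\<lambda>d. (\<phi> d - \<phi> 0) / 2) \<in> borel_measurable borel" by measurable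
  qed
  then show ?thesis
    using risk_cong_label_space[OF rank_loss_eq_pair_loss]
      bayes_risk_cong_label_space[OF rank_loss_eq_pair_loss]
      risk_cong_label_space[OF surr_loss_eq_pair_loss[OF _ odd]]
      bayes_risk_cong_label_space[OF surr_loss_eq_pair_loss[OF _ odd]]
    by simp
qed

theorem theorem5:
  fixes M :: "'x measure" and q :: nat and \<phi> :: "real \<Rightarrow> real"
  assumes "q \<ge> 2"
    and "bdd_below (range \<phi>)"
    and "\<And>t. \<phi> differentiable (at t)"
    and "antimono \<phi>"
    and "deriv \<phi> 0 < 0"
    and "\<And>t. \<phi> t + \<phi> (- t) = 2 * \<phi> 0"
  shows "\<exists>\<xi> :: real \<Rightarrow> real.
           (\<forall>t\<ge>0. \<xi> t \<ge> 0) \<and> mono_on {0..} \<xi> \<and> concave_on {0..} \<xi> \<and> \<xi> 0 = 0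
         \<and> (\<xi> \<longlongrightarrow> 0) (at_right 0)
         \<and> (\<forall>D :: ('x \<times> (nat \<Rightarrow> int)) measure. \<forall>f.
               prob_space D \<longrightarrow> sets D = sets (M \<Otimes>\<^sub>M count_space (label_space q)) \<longrightarrow>
               f \<in> scorers M q \<longrightarrow>
               risk D (rank_loss q) f - bayes_risk M q D (rank_loss q)
                 \<le> \<xi> (risk D (surr_loss \<phi> q) f - bayes_risk M q D (surr_loss \<phi> q)))"
proof (intro exI[of _ "\<lambda>t. t / phi_gap \<phi>"] conjI)
  have c: "0 < phi_gap \<phi>" using phi_gap_pos assms(2,3,5) by blast
  then show "\<forall>t\<ge>0. 0 \<le> t / phi_gap \<phi>" by simp
  show "mono_on {0..} (\<lambda>t. t / phi_gap \<phi>)" using c by (intro mono_onI divide_right_mono) auto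
  show "concave_on {0..} (\<lambda>t. t / phi_gap \<phi>)"
    using c by (intro concave_on_cdiv concave_on_ident[THEN iffD2]) auto
  show "0 / phi_gap \<phi> = 0" by simp
  show "((\<lambda>t. t / phi_gap \<phi>) \<longlongrightarrow> 0) (at_right 0)" using c by (auto intro!: tendsto_eq_intros)
  show "\<forall>D :: ('x \<times> (nat \<Rightarrow> int)) measure. \<forall>f.
          prob_space D \<longrightarrow> sets D = sets (M \<Otimes>\<^sub>M count_space (label_space q)) \<longrightarrow>
          f \<in> scorers M q \<longrightarrow>
          risk D (rank_loss q) f - bayes_risk M q D (rank_loss q)
            \<le> (risk D (surr_loss \<phi> q) f - bayes_risk M q D (surr_loss \<phi> q)) / phi_gap \<phi>"
  proof (intro allI impI)
    fix D :: "('x \<times> (nat \<Rightarrow> int)) measure" and f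
    assume "prob_space D" "sets D = sets (M \<Otimes>\<^sub>M count_space (label_space q))" "f \<in> scorers M q"
    then interpret labelled_sample D M q by (simp add: labelled_sample_def labelled_sample_axioms_def)
    show "risk D (rank_loss q) f - bayes_risk M q D (rank_loss q)
        \<le> (risk D (surr_loss \<phi> q) f - bayes_risk M q D (surr_loss \<phi> q)) / phi_gap \<phi>"
      using excess_rank_risk_le assms(2-6) \<open>f \<in> scorers M q\<close> by blast
  qed
qed

end
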